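(* Let $(\mathbb{X},d)$ be a complete metric space, let $F=(\mathbb{X};f_1,\dots,f_N)$ be an iterated function system of continuous maps $f_i:\mathbb{X}\to\mathbb{X}$, and let $A$ be a point-fibred attractor of $F$ with coordinate map $\pi:[N]^\infty\to A$. With respect to $A$ and $F$ (and the notions of disjunctive, reversible, strongly reversible and full words defined in the context): \begin{enumerate} \item If $N\ge 2$, there are infinitely many disjunctive words in $[N]^\infty$. \item If $A^{o}\neq\emptyset$, then every disjunctive word is strongly reversible. \item Every strongly reversible word is reversible. \item A word $\theta\in[N]^\infty$ is reversible if and only if it is full. \end{enumerate}
   Context: $S^o$ denotes the interior of a set $S$. $\mathbb{H}(\mathbb{X})$ is the set of nonempty compact subsets of $\mathbb{X}$ with the Hausdorff metric, and $F(B)=\bigcup_i f_i(B)$, with $F^k$ its $k$-fold iterate. A nonempty compact $A$ is an attractor of $F$ if $F(A)=A$ and there is an open $U\supset A$ with $F^k(S)\to A$ in the Hausdorff metric for all $S\in\mathbb{H}(U)$; the basin $B(A)$ is the union of all such $U$. $[N]=\{1,\dots,N\}$, $[N]^\infty$ is the set of infinite words $\omega=\omega_1\omega_2\cdots$ with $\omega_i\in[N]$, $\omega|k=\omega_1\cdots\omega_k$, and $f_{\omega|k}=f_{\omega_1}\circ\cdots\circ f_{\omega_k}$. The attractor $A$ is point-fibred if for every $\omega\in[N]^\infty$ and every $C\in\mathbb{H}(\mathbb{X})$ with $C\subset B(A)$ the sequence $f_{\omega|k}(C)$ converges in $\mathbb{H}(\mathbb{X})$ to a singleton $\{\pi(\omega)\}$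 independent of $C$; this defines the coordinate map $\pi$, and any word in $\pi^{-1}(x)$ is an address of $x\in A$. A subword of a word is a string of consecutive letters. A word $\theta\in[N]^\infty$ is disjunctive if every finite word over $[N]$ is a subword of $\theta$. $\theta$ is reversible (w.r.t. $A,F$) if there is $\omega\in[N]^\infty$ with $\pi(\omega)\in A^o$ such that for all positive integers $M,L$ there is an integer $m\ge M$ with $\omega_1\omega_2\cdots\omega_L=\theta_{m+L}\theta_{m+L-1}\cdots\theta_{m+1}$. $\theta$ is strongly reversible if there is $\omega\in[N]^\infty$ with $\pi(\omega)\in A^o$ such that for every positive integer $M$ there is $m\ge M$ with $\omega_1\cdots\omega_m=\theta_m\theta_{m-1}\cdots\theta_1$. $\theta$ is full if there exists a nonempty compact set $A'\subset A^o$ such that for every positive integer $M$ there exist integers $n>m\ge M$ with $f_{\theta_n}\circ f_{\theta_{n-1}}\circ\cdots\circ f_{\theta_{m+1}}(A)\subset A'$. *)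

theory Defs
  imports "HOL-Analysis.Analysis"
begin

text \<open>Hausdorff distance between nonempty compact sets (all sets to which it is
applied below are nonempty and compact).\<close>
definition hausdist :: "'a::metric_space set \<Rightarrow> 'a set \<Rightarrow> real" where
  "hausdist S T = max (SUP x\<in>S. infdist x T) (SUP y\<in>T. infdist y S)"

definition ne_compact :: "'a::metric_space set \<Rightarrow> bool" where
  "ne_compact S \<longleftrightarrow> S \<noteq> {} \<and> compact S"

definition hutch :: "(nat \<Rightarrow> 'a \<Rightarrow> 'a) \<Rightarrow> nat \<Rightarrow> 'a set \<Rightarrow> 'a set" where
  "hutch f N B = (\<Union>i\<in>{1..N}. f i ` B)"

text \<open>Infinite words over [N] = {1..N}; the letter omega_(k+1) of the paper is omega k.\<close>
definition words :: "nat \<Rightarrow> (nat \<Rightarrow> nat) set" where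
  "words N = {\<omega>. \<forall>k. \<omega> k \<in> {1..N}}"

fun fcomp :: "(nat \<Rightarrow> 'a \<Rightarrow> 'a) \<Rightarrow> (nat \<Rightarrow> nat) \<Rightarrow> nat \<Rightarrow> 'a \<Rightarrow> 'a" where
  "fcomp f \<omega> 0 = id"
| "fcomp f \<omega> (Suc k) = fcomp f \<omega> k \<circ> f (\<omega> k)"

text \<open>blockcomp f theta m k = f_(theta_(m+k)) o ... o f_(theta_(m+1)) (paper's 1-based letters).\<close>
fun blockcomp :: "(nat \<Rightarrow> 'a \<Rightarrow> 'a) \<Rightarrow> (nat \<Rightarrow> nat) \<Rightarrow> nat \<Rightarrow> nat \<Rightarrow> 'a \<Rightarrow> 'a" where
  "blockcomp f \<theta> m 0 = id"
| "blockcomp f \<theta> m (Suc k) = f (\<theta> (m + k)) \<circ> blockcomp f \<theta> m k"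

definition attracting_nbhd :: "(nat \<Rightarrow> 'a::metric_space \<Rightarrow> 'a) \<Rightarrow> nat \<Rightarrow> 'a set \<Rightarrow> 'a set \<Rightarrow> bool" where
  "attracting_nbhd f N A U \<longleftrightarrow> open U \<and> A \<subseteq> U \<and>
     (\<forall>S. ne_compact S \<and> S \<subseteq> U \<longrightarrow> (\<lambda>k. hausdist ((hutch f N ^^ k) S) A) \<longlonglongrightarrow> 0)"

definition attractor :: "(nat \<Rightarrow> 'a::metric_space \<Rightarrow> 'a) \<Rightarrow> nat \<Rightarrow> 'a set \<Rightarrow> bool" where
  "attractor f N A \<longleftrightarrow> ne_compact A \<and> hutch f N A = A \<and> (\<exists>U. attracting_nbhd f N A U)"

definition basin :: "(nat \<Rightarrow> 'a::metric_space \<Rightarrow> 'a) \<Rightarrow> nat \<Rightarrow> 'a set \<Rightarrow> 'a set" where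
  "basin f N A = \<Union>{U. attracting_nbhd f N A U}"

definition coord_map :: "(nat \<Rightarrow> 'a::metric_space \<Rightarrow> 'a) \<Rightarrow> nat \<Rightarrow> 'a set \<Rightarrow> ((nat \<Rightarrow> nat) \<Rightarrow> 'a) \<Rightarrow> bool" where
  "coord_map f N A \<pi> \<longleftrightarrow> (\<forall>\<omega>\<in>words N. \<forall>C. ne_compact C \<and> C \<subseteq> basin f N A \<longrightarrow>
      (\<lambda>k. hausdist (fcomp f \<omega> k ` C) {\<pi> \<omega>}) \<longlonglongrightarrow> 0)"

definition point_fibred :: "(nat \<Rightarrow> 'a::metric_space \<Rightarrow> 'a) \<Rightarrow> nat \<Rightarrow> 'a set \<Rightarrow> bool" where
  "point_fibred f N A \<longleftrightarrow> (\<exists>\<pi>. coord_map f N A \<pi>)"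

definition disjunctive :: "nat \<Rightarrow> (nat \<Rightarrow> nat) \<Rightarrow> bool" where
  "disjunctive N \<theta> \<longleftrightarrow> (\<forall>w. set w \<subseteq> {1..N} \<longrightarrow> (\<exists>m. \<forall>i<length w. \<theta> (m + i) = w ! i))"

text \<open>omega_1...omega_L = theta_(m+L)...theta_(m+1), shifted to 0-based positions.\<close>
definition reversible :: "nat \<Rightarrow> 'a::topological_space set \<Rightarrow> ((nat \<Rightarrow> nat) \<Rightarrow> 'a) \<Rightarrow> (nat \<Rightarrow> nat) \<Rightarrow> bool" where
  "reversible N A \<pi> \<theta> \<longleftrightarrow> (\<exists>\<omega>\<in>words N. \<pi> \<omega> \<in> interior A \<and>
     (\<forall>M L. M > 0 \<and> L > 0 \<longrightarrow> (\<exists>m\<ge>M. \<forall>i<L. \<omega> i = \<theta> (m + L - 1 - i))))"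

text \<open>omega_1...omega_m = theta_m...theta_1, shifted to 0-based positions.\<close>
definition strongly_reversible :: "nat \<Rightarrow> 'a::topological_space set \<Rightarrow> ((nat \<Rightarrow> nat) \<Rightarrow> 'a) \<Rightarrow> (nat \<Rightarrow> nat) \<Rightarrow> bool" where
  "strongly_reversible N A \<pi> \<theta> \<longleftrightarrow> (\<exists>\<omega>\<in>words N. \<pi> \<omega> \<in> interior A \<and>
     (\<forall>M. M > 0 \<longrightarrow> (\<exists>m\<ge>M. \<forall>i<m. \<omega> i = \<theta> (m - 1 - i))))"

definition full :: "(nat \<Rightarrow> 'a::metric_space \<Rightarrow> 'a) \<Rightarrow> 'a set \<Rightarrow> (nat \<Rightarrow> nat) \<Rightarrow> bool" where
  "full f A \<theta> \<longleftrightarrow> (\<exists>A'. ne_compact A' \<and> A' \<subseteq> interior A \<and>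
     (\<forall>M. M > 0 \<longrightarrow> (\<exists>n m. n > m \<and> m \<ge> M \<and> blockcomp f \<theta> m (n - m) ` A \<subseteq> A')))"

end

theory Submission
  imports Defs "HOL-Library.Stream"
begin

text \<open>
  A disjunctive word is obtained by concatenating all finite words; prefixing it by \<open>1\<^sup>k 2\<close>
  gives infinitely many.

  For the attractor, \<open>\<pi> \<omega>\<close> lies in every set \<open>f\<^bsub>\<omega>|k\<^esub>(A)\<close>, and these sets shrink to
  \<open>\<pi> \<omega>\<close>.  Hence an address \<open>\<omega>\<close> of an interior point has a prefix \<open>\<omega>|k\<close> with
  \<open>f\<^bsub>\<omega>|k\<^esub>(A) \<subseteq> A\<^sup>o\<close>, and every word with that prefix addresses a point of \<open>A\<^sup>o\<close>.
  Reversibility of \<open>\<theta>\<close> says that \<open>\<omega>|k\<close> reversed occurs arbitrarily late in \<open>\<theta>\<close>, i.e. that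
  a block of \<open>\<theta>\<close> maps \<open>A\<close> into the compact set \<open>A' = f\<^bsub>\<omega>|k\<^esub>(A) \<subseteq> A\<^sup>o\<close>, which is fullness.
  Conversely, a Koenig-type compactness argument on the reversed words ending at such blocks
  produces an address whose point lies in \<open>A'\<close>.  For a disjunctive \<open>\<theta>\<close>, nesting occurrences of
  its own prefixes yields a word whose prefixes are arbitrarily long reversed prefixes of \<open>\<theta>\<close>,
  and it may be started with any prescribed finite word, in particular \<open>\<omega>|k\<close>.
\<close>

lemma flat_eq_concat_stake_shift:
  assumes "\<forall>xs\<in>sset ws. xs \<noteq> []"
  shows "flat ws = concat (stake j ws) @- flat (sdrop j ws)"
  using assms
proof (induction j arbitrary: ws)
  case (Suc j)
  have "flat ws = shd ws @- flat (stl ws)"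
    using Suc.prems by (intro flat_unfold) (simp add: shd_sset)
  also have "flat (stl ws) = concat (stake j (stl ws)) @- flat (sdrop j (stl ws))"
    using Suc.prems by (intro Suc.IH) (auto simp: stl_sset)
  finally show ?case by simp
qed simp

text \<open>Concatenate all finite words over [N], enumerated through a bijection with \<open>nat list\<close>;
  each is followed by the letter 1 so that no block is empty.\<close>
lemma exists_disjunctive_word:
  assumes "N \<ge> 1"
  shows "\<exists>\<theta>\<in>words N. disjunctive N \<theta>"
proof -
  define e where "e = (\<lambda>j::nat. map (\<lambda>x. x mod N + 1) (from_nat j :: nat list) @ [1])"
  define ws where "ws = smap e nats"
  have ne: "\<forall>xs\<in>sset ws. xs \<noteq> []" by (auto simp: ws_def e_def stream.set_map)
  define \<theta> where "\<theta> = (!!) (flat ws)"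
  have "\<theta> n \<in> {1..N}" for n
  proof -
    have "\<theta> n \<in> sset (flat ws)" by (simp add: \<theta>_def)
    then have "\<theta> n \<in> (\<Union>xs\<in>sset ws. set xs)" using ne by simp
    then show ?thesis using assms by (auto simp: ws_def e_def stream.set_map Suc_le_eq)
  qed
  then have "\<theta> \<in> words N" by (simp add: words_def)
  moreover have "disjunctive N \<theta>"
    unfolding disjunctive_def
  proof (intro allI impI)
    fix w :: "nat list" assume w: "set w \<subseteq> {1..N}"
    define j where "j = to_nat (map (\<lambda>x. x - 1) w)"
    have "map (\<lambda>x. (x - 1) mod N + 1) w = w"
      using w by (induction w) auto
    then have ej: "e j = w @ [1]" by (simp add: e_def j_def comp_def)
    have "flat (sdrop j ws) = shd (sdrop j ws) @- flat (stl (sdrop j ws))"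
      by (rule flat_unfold) (simp add: ws_def ej)
    then have "flat (sdrop j ws) = e j @- flat (stl (sdrop j ws))"
      by (simp add: ws_def)
    then have "flat ws = concat (stake j ws) @- e j @- flat (stl (sdrop j ws))"
      using flat_eq_concat_stake_shift[OF ne, of j] by simp
    then have "\<theta> (length (concat (stake j ws)) + i) = w ! i" if "i < length w" for i
      using that by (simp add: \<theta>_def ej nth_append)
    then show "\<exists>m. \<forall>i<length w. \<theta> (m + i) = w ! i" by blast
  qed
  ultimately show ?thesis by blast
qed

lemma infinite_disjunctive_words:
  assumes "N \<ge> 2"
  shows "infinite {\<theta>\<in>words N. disjunctive N \<theta>}"
proof -
  obtain \<theta> where \<theta>: "\<theta> \<in> words N" "disjunctive N \<theta>"
    using exists_disjunctive_word[of N] assms by auto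
  define g where "g = (\<lambda>k n. if n < k then 1 else if n = k then 2 else \<theta> (n - k - 1))"
  have "g k j \<noteq> g j j" if "j < k" for j k
    using that by (simp add: g_def)
  then have "inj g"
    by (metis injI linorder_neqE_nat)
  moreover have "disjunctive N (g k)" for k
    unfolding disjunctive_def
  proof (intro allI impI)
    fix w :: "nat list" assume "set w \<subseteq> {1..N}"
    then obtain m where "\<forall>i<length w. \<theta> (m + i) = w ! i"
      using \<theta>(2) unfolding disjunctive_def by blast
    then have "\<forall>i<length w. g k (m + k + 1 + i) = w ! i"
      by (simp add: g_def)
    then show "\<exists>m. \<forall>i<length w. g k (m + i) = w ! i" by blast
  qed
  moreover have "g k \<in> words N" for k
    using \<theta>(1) assms by (auto simp: words_def g_def)
  ultimately have "range g \<subseteq> {\<theta>\<in>words N. disjunctive N \<theta>}" "infinite (range g)"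
    by (auto simp: range_inj_infinite)
  then show ?thesis using finite_subset by blast
qed

lemma disjunctive_occurrence_ge:
  assumes "\<theta> \<in> words N" "disjunctive N \<theta>" "set w \<subseteq> {1..N}"
  shows "\<exists>p\<ge>M. \<forall>i<length w. \<theta> (p + i) = w ! i"
proof -
  have "set (map \<theta> [0..<M] @ w) \<subseteq> {1..N}"
    using assms(1,3) by (auto simp: words_def)
  then obtain q where q: "\<forall>i<length (map \<theta> [0..<M] @ w). \<theta> (q + i) = (map \<theta> [0..<M] @ w) ! i"
    using assms(2) unfolding disjunctive_def by blast
  have "\<theta> (q + M + i) = w ! i" if "i < length w" for i
    using q[rule_format, of "M + i"] that by (simp add: nth_append add.assoc)
  then show ?thesis by (intro exI[of _ "q + M"]) simp
qed

lemma diagonal_eq_of_coherent: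
  fixes len :: "nat \<Rightarrow> nat"
  assumes mono: "strict_mono len" and coherent: "\<And>j i. i < len j \<Longrightarrow> R (Suc j) i = R j i"
    and "i < len j"
  shows "R (Suc i) i = R j i"
proof -
  have stable: "R j' i = R j i" if "i < len j" "j \<le> j'" for j j'
    using that(2)
  proof (induction rule: dec_induct)
    case (step k)
    have "i < len k" using \<open>i < len j\<close> \<open>j \<le> k\<close> mono by (meson less_le_trans strict_mono_less_eq)
    then show ?case using coherent[of i k] step.IH by simp
  qed simp
  have "i < len (Suc i)" using strict_mono_imp_increasing[OF mono, of "Suc i"] by simp
  then have "R (max j (Suc i)) i = R (Suc i) i" by (intro stable) auto
  moreover have "R (max j (Suc i)) i = R j i" using \<open>i < len j\<close> by (intro stable) auto
  ultimately show ?thesis by simp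
qed

lemma infinite_branch_exists:
  assumes root: "infinite (S [])" and extend: "\<And>u. infinite (S u) \<Longrightarrow> \<exists>c. infinite (S (u @ [c]))"
  shows "\<exists>\<omega>. \<forall>L. infinite (S (map \<omega> [0..<L]))"
proof -
  have "\<exists>us. \<forall>j. (length (us j) = j \<and> infinite (S (us j))) \<and> (\<exists>c. us (Suc j) = us j @ [c])"
  proof (intro dependent_nat_choice)
    show "\<exists>u. length u = 0 \<and> infinite (S u)" using root by simp
  next
    fix u and j :: nat assume "length u = j \<and> infinite (S u)"
    with extend obtain c where "length u = j" "infinite (S (u @ [c]))" by blast
    then show "\<exists>v. (length v = Suc j \<and> infinite (S v)) \<and> (\<exists>c. v = u @ [c])"
      by (intro exI[of _ "u @ [c]"]) auto
  qed
  then obtain us where us: "\<And>j. length (us j) = j" "\<And>j. infinite (S (us j))"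
    "\<And>j. \<exists>c. us (Suc j) = us j @ [c]"
    by blast
  define \<omega> where "\<omega> i = us (Suc i) ! i" for i
  have "us j ! i = \<omega> i" if "i < j" for i j
    unfolding \<omega>_def
  proof (rule diagonal_eq_of_coherent[where len = id and R = "\<lambda>j i. us j ! i", simplified, symmetric])
    show "us (Suc j) ! i = us j ! i" if "i < j" for j i
      using us(1)[of j] us(3)[of j] that by (auto simp: nth_append)
  qed (simp_all add: that strict_mono_def)
  then have "us L = map \<omega> [0..<L]" for L
    using us(1) by (intro nth_equalityI) auto
  then show ?thesis using us(2) by metis
qed

lemma reversed_prefixes_of_disjunctive:
  assumes \<theta>: "\<theta> \<in> words N" "disjunctive N \<theta>" and u: "set u \<subseteq> {1..N}"
  shows "\<exists>\<omega>\<in>words N. (\<forall>i<length u. \<omega> i = u ! i) \<and> (\<forall>M. \<exists>m\<ge>M. \<forall>i<m. \<omega> i = \<theta> (m - 1 - i))"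
proof -
  define P where "P m \<longleftrightarrow> length u \<le> m \<and> (\<forall>i<length u. \<theta> (m - 1 - i) = u ! i)" for m
  define Q where "Q m m' \<longleftrightarrow> m < m' \<and> (\<forall>i<m. \<theta> (m' - 1 - i) = \<theta> (m - 1 - i))" for m m'
  have "\<exists>m. P m"
  proof -
    obtain p where p: "\<forall>i<length u. \<theta> (p + i) = rev u ! i"
      using disjunctive_occurrence_ge[OF \<theta>, of "rev u" 0] u by auto
    have "\<theta> (p + length u - 1 - i) = u ! i" if "i < length u" for i
      using p[rule_format, of "length u - 1 - i"] that by (simp add: rev_nth Suc_diff_Suc)
    then show ?thesis unfolding P_def by (intro exI[of _ "p + length u"]) simp
  qed
  moreover have "\<exists>m'. P m' \<and> Q m m'" if "P m" for m
  proof -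
    have "set (map \<theta> [0..<m]) \<subseteq> {1..N}" using \<theta>(1) by (auto simp: words_def)
    then obtain p where p: "p \<ge> 1" "\<forall>i<m. \<theta> (p + i) = \<theta> i"
      using disjunctive_occurrence_ge[OF \<theta>, of "map \<theta> [0..<m]" 1] by auto
    have "\<theta> (p + m - 1 - i) = \<theta> (m - 1 - i)" if "i < m" for i
      using p(2)[rule_format, of "m - 1 - i"] that by (simp add: add.commute)
    then have "Q m (p + m)" using p(1) unfolding Q_def by simp
    then show ?thesis using \<open>P m\<close> unfolding P_def Q_def by (intro exI[of _ "p + m"]) auto
  qed
  ultimately obtain ms where ms: "\<And>j. P (ms j)" "\<And>j. Q (ms j) (ms (Suc j))"
    using dependent_nat_choice[of "\<lambda>_. P" "\<lambda>_. Q"] by blast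
  have mono: "strict_mono ms" using ms(2) by (simp add: strict_mono_Suc_iff Q_def)
  define \<omega> where "\<omega> i = \<theta> (ms (Suc i) - 1 - i)" for i
  have agree: "\<omega> i = \<theta> (ms j - 1 - i)" if "i < ms j" for i j
    unfolding \<omega>_def
  proof (rule diagonal_eq_of_coherent[OF mono, where R = "\<lambda>j i. \<theta> (ms j - 1 - i)"])
    show "\<theta> (ms (Suc j) - 1 - i) = \<theta> (ms j - 1 - i)" if "i < ms j" for j i
      using ms(2)[of j] that unfolding Q_def by blast
  qed (rule that)
  have "\<omega> \<in> words N" using \<theta>(1) by (simp add: words_def \<omega>_def)
  moreover have "\<omega> i = u ! i" if "i < length u" for i
    using ms(1)[of "Suc i"] that by (simp add: P_def \<omega>_def)
  moreover have "\<exists>m\<ge>M. \<forall>i<m. \<omega> i = \<theta> (m - 1 - i)" for M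
    using agree strict_mono_imp_increasing[OF mono, of M] by blast
  ultimately show ?thesis by blast
qed

lemma reversed_prefix_limit:
  assumes \<theta>: "\<theta> \<in> words N" and G: "infinite G"
  shows "\<exists>\<omega>\<in>words N. \<forall>L. infinite {n\<in>G. \<forall>i<L. \<theta> (n - 1 - i) = \<omega> i}"
proof -
  define S where "S u = {n\<in>G. \<forall>i<length u. \<theta> (n - 1 - i) = u ! i}" for u
  have "\<exists>c. infinite (S (u @ [c]))" if inf: "infinite (S u)" for u
  proof -
    have "(\<lambda>n. \<theta> (n - 1 - length u)) ` S u \<subseteq> {1..N}"
      using \<theta> by (auto simp: words_def)
    then have "finite ((\<lambda>n. \<theta> (n - 1 - length u)) ` S u)"
      by (rule finite_subset) simp
    then obtain n0 where "infinite {n\<in>S u. \<theta> (n - 1 - length u) = \<theta> (n0 - 1 - length u)}"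
      using pigeonhole_infinite[OF inf] by blast
    also have "{n\<in>S u. \<theta> (n - 1 - length u) = \<theta> (n0 - 1 - length u)}
        = S (u @ [\<theta> (n0 - 1 - length u)])"
      by (simp add: S_def All_less_Suc nth_append conj_ac)
    finally show ?thesis by blast
  qed
  moreover have "infinite (S [])" using G by (simp add: S_def)
  ultimately obtain \<omega> where \<omega>: "\<And>L. infinite (S (map \<omega> [0..<L]))"
    using infinite_branch_exists[of S] by blast
  have S_\<omega>: "S (map \<omega> [0..<L]) = {n\<in>G. \<forall>i<L. \<theta> (n - 1 - i) = \<omega> i}" for L
    by (simp add: S_def)
  have "\<omega> i \<in> {1..N}" for i
  proof -
    obtain n where "n \<in> S (map \<omega> [0..<Suc i])" using infinite_imp_nonempty[OF \<omega>] by blast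
    then have "\<forall>j<Suc i. \<theta> (n - 1 - j) = \<omega> j" by (simp only: S_\<omega> mem_Collect_eq) blast
    then have "\<omega> i = \<theta> (n - 1 - i)" by simp
    then show ?thesis using \<theta> by (simp add: words_def)
  qed
  then have "\<omega> \<in> words N" by (simp add: words_def)
  then show ?thesis using \<omega> by (auto simp: S_\<omega>)
qed

lemma strongly_reversible_imp_reversible:
  assumes "strongly_reversible N A \<pi> \<theta>"
  shows "reversible N A \<pi> \<theta>"
proof -
  obtain \<omega> where \<omega>: "\<omega> \<in> words N" "\<pi> \<omega> \<in> interior A"
    and sr: "\<And>M. M > 0 \<Longrightarrow> \<exists>m\<ge>M. \<forall>i<m. \<omega> i = \<theta> (m - 1 - i)"
    using assms unfolding strongly_reversible_def by blast
  have "\<exists>m\<ge>M. \<forall>i<L. \<omega> i = \<theta> (m + L - 1 - i)" if "L > 0" for M L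
  proof -
    obtain m where "m \<ge> M + L" "\<forall>i<m. \<omega> i = \<theta> (m - 1 - i)"
      using sr[of "M + L"] that by blast
    then show ?thesis by (intro exI[of _ "m - L"]) auto
  qed
  then show ?thesis unfolding reversible_def using \<omega> by blast
qed

lemma dist_le_hausdist_singleton:
  assumes "compact S" "y \<in> S"
  shows "dist y x \<le> hausdist S {x}"
proof -
  obtain b where b: "\<forall>z\<in>S. dist x z \<le> b"
    using compact_imp_bounded[OF assms(1)] bounded_any_center by blast
  have "bdd_above ((\<lambda>z. infdist z {x}) ` S)"
    using b by (intro bdd_aboveI2[where M = b]) (simp add: infdist_singleton dist_commute)
  then have "infdist y {x} \<le> (SUP z\<in>S. infdist z {x})"
    using assms(2) by (rule cSUP_upper2) simp
  then show ?thesis by (simp add: infdist_singleton hausdist_def)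
qed

lemma tendsto_of_hausdist_singleton:
  assumes "\<And>k. y k \<in> S k" "\<And>k. compact (S k)" "(\<lambda>k. hausdist (S k) {p}) \<longlonglongrightarrow> 0"
  shows "y \<longlonglongrightarrow> p"
proof -
  have "(\<lambda>k. dist (y k) p) \<longlonglongrightarrow> 0"
  proof (rule tendsto_sandwich[OF _ _ tendsto_const assms(3)])
    show "\<forall>\<^sub>F k in sequentially. dist (y k) p \<le> hausdist (S k) {p}"
      using dist_le_hausdist_singleton[OF assms(2) assms(1)] by simp
  qed simp
  then show ?thesis by (rule tendsto_dist_iff[THEN iffD2])
qed

lemma fcomp_cong: "(\<And>i. i < k \<Longrightarrow> \<omega> i = \<omega>' i) \<Longrightarrow> fcomp f \<omega> k = fcomp f \<omega>' k"
  by (induction k) auto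

lemma blockcomp_Suc_shift: "blockcomp f \<theta> m (Suc k) = blockcomp f \<theta> (Suc m) k \<circ> f (\<theta> m)"
  by (induction k arbitrary: m) (simp_all add: comp_assoc)

lemma blockcomp_eq_fcomp: "blockcomp f \<theta> m k = fcomp f (\<lambda>i. \<theta> (m + k - 1 - i)) k"
proof (induction k arbitrary: m)
  case (Suc k)
  have "blockcomp f \<theta> m (Suc k) = fcomp f (\<lambda>i. \<theta> (Suc m + k - 1 - i)) k \<circ> f (\<theta> m)"
    by (simp only: blockcomp_Suc_shift Suc.IH)
  also have "fcomp f (\<lambda>i. \<theta> (Suc m + k - 1 - i)) k = fcomp f (\<lambda>i. \<theta> (m + Suc k - 1 - i)) k"
    by (rule fcomp_cong) simp
  finally show ?case by simp
qed simp

locale ifs_attractor =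
  fixes f :: "nat \<Rightarrow> 'a::metric_space \<Rightarrow> 'a" and N :: nat and A :: "'a set"
    and \<pi> :: "(nat \<Rightarrow> nat) \<Rightarrow> 'a"
  assumes continuous: "\<And>i. i \<in> {1..N} \<Longrightarrow> continuous_on UNIV (f i)"
    and attractor: "attractor f N A"
    and coord_map: "coord_map f N A \<pi>"
begin

lemma compact_A: "compact A" and A_nonempty: "A \<noteq> {}" and hutch_A: "hutch f N A = A"
  using attractor by (auto simp: attractor_def ne_compact_def)

lemma maps_into_A: "i \<in> {1..N} \<Longrightarrow> f i ` A \<subseteq> A"
  using hutch_A unfolding hutch_def by blast

lemma A_subset_basin: "A \<subseteq> basin f N A"
  using attractor unfolding attractor_def basin_def attracting_nbhd_def by blast

lemma continuous_fcomp: "\<omega> \<in> words N \<Longrightarrow> continuous_on UNIV (fcomp f \<omega> k)"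
proof (induction k)
  case (Suc k)
  have "continuous_on UNIV (f (\<omega> k))" using Suc.prems continuous by (auto simp: words_def)
  then show ?case
    using Suc by (auto intro: continuous_on_compose2[of UNIV "fcomp f \<omega> k" UNIV])
qed (simp add: continuous_on_id)

lemma compact_fcomp_image: "\<omega> \<in> words N \<Longrightarrow> compact (fcomp f \<omega> k ` A)"
  using continuous_fcomp compact_A by (metis compact_continuous_image continuous_on_subset top_greatest)

lemma fcomp_image_antimono:
  assumes "\<omega> \<in> words N" "k \<le> k'"
  shows "fcomp f \<omega> k' ` A \<subseteq> fcomp f \<omega> k ` A"
  using assms(2)
proof (induction rule: dec_induct)
  case (step j)
  have "f (\<omega> j) ` A \<subseteq> A" using assms(1) maps_into_A by (simp add: words_def)
  then have "fcomp f \<omega> (Suc j) ` A \<subseteq> fcomp f \<omega> j ` A" by (auto simp: image_comp[symmetric])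
  then show ?case using step.IH by blast
qed simp

lemma coord_tendsto: "\<omega> \<in> words N \<Longrightarrow> (\<lambda>k. hausdist (fcomp f \<omega> k ` A) {\<pi> \<omega>}) \<longlonglongrightarrow> 0"
  using coord_map A_subset_basin compact_A A_nonempty unfolding coord_map_def ne_compact_def by blast

lemma coord_in_closed:
  assumes \<omega>: "\<omega> \<in> words N" and B: "closed B" and meets: "\<And>k. fcomp f \<omega> k ` A \<inter> B \<noteq> {}"
  shows "\<pi> \<omega> \<in> B"
proof -
  have "\<forall>k. \<exists>y. y \<in> fcomp f \<omega> k ` A \<inter> B" using meets by blast
  then obtain y where y: "\<And>k. y k \<in> fcomp f \<omega> k ` A \<inter> B" by metis
  have "y \<longlonglongrightarrow> \<pi> \<omega>"
    using y by (intro tendsto_of_hausdist_singleton[OF _ compact_fcomp_image[OF \<omega>] coord_tendsto[OF \<omega>]])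
      blast
  then show ?thesis using y closed_sequentially[OF B] by blast
qed

lemma coord_in_fcomp_image:
  assumes \<omega>: "\<omega> \<in> words N"
  shows "\<pi> \<omega> \<in> fcomp f \<omega> k ` A"
proof (rule coord_in_closed[OF \<omega> compact_imp_closed[OF compact_fcomp_image[OF \<omega>]]])
  fix j
  have "fcomp f \<omega> (max j k) ` A \<subseteq> fcomp f \<omega> j ` A \<inter> fcomp f \<omega> k ` A"
    using fcomp_image_antimono[OF \<omega>] by simp
  then show "fcomp f \<omega> j ` A \<inter> fcomp f \<omega> k ` A \<noteq> {}" using A_nonempty by blast
qed

text \<open>Follow preimages under \<open>A = F(A)\<close> backwards.\<close>
lemma coord_surj:
  assumes x: "x \<in> A"
  shows "\<exists>\<omega>\<in>words N. \<pi> \<omega> = x"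
proof -
  have "\<forall>y\<in>A. \<exists>p\<in>{1..N} \<times> A. y = f (fst p) (snd p)"
    using hutch_A unfolding hutch_def by fastforce
  then obtain g where g: "\<And>y. y \<in> A \<Longrightarrow> g y \<in> {1..N} \<times> A \<and> y = f (fst (g y)) (snd (g y))"
    by metis
  define xs where "xs k = ((snd \<circ> g) ^^ k) x" for k
  have xs_A: "xs k \<in> A" for k
  proof (induction k)
    case (Suc k)
    then show ?case using g[OF Suc.IH] by (simp add: xs_def mem_Times_iff)
  qed (simp add: xs_def x)
  define \<omega> where "\<omega> k = fst (g (xs k))" for k
  have "\<omega> k \<in> {1..N}" for k using g[OF xs_A[of k]] by (simp add: \<omega>_def mem_Times_iff)
  then have \<omega>: "\<omega> \<in> words N" by (simp add: words_def)
  have "fcomp f \<omega> k (xs k) = x" for k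
  proof (induction k)
    case (Suc k)
    have "f (\<omega> k) (xs (Suc k)) = xs k" using g[OF xs_A[of k]] by (simp add: \<omega>_def xs_def)
    then show ?case using Suc by simp
  qed (simp add: xs_def)
  then have "fcomp f \<omega> k ` A \<inter> {x} \<noteq> {}" for k using xs_A by blast
  then have "\<pi> \<omega> \<in> {x}" by (intro coord_in_closed[OF \<omega>]) auto
  then show ?thesis using \<omega> by blast
qed

lemma eventually_fcomp_image_subset:
  assumes \<omega>: "\<omega> \<in> words N" and U: "open U" "\<pi> \<omega> \<in> U"
  shows "eventually (\<lambda>k. fcomp f \<omega> k ` A \<subseteq> U) sequentially"
proof -
  obtain e where e: "e > 0" "ball (\<pi> \<omega>) e \<subseteq> U" using U open_contains_ball by blast
  have "eventually (\<lambda>k. hausdist (fcomp f \<omega> k ` A) {\<pi> \<omega>} < e) sequentially"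
    using order_tendstoD(2)[OF coord_tendsto[OF \<omega>] e(1)] .
  then show ?thesis
  proof (rule eventually_mono)
    fix k assume "hausdist (fcomp f \<omega> k ` A) {\<pi> \<omega>} < e"
    then have "fcomp f \<omega> k ` A \<subseteq> ball (\<pi> \<omega>) e"
      using dist_le_hausdist_singleton[OF compact_fcomp_image[OF \<omega>], of _ k "\<pi> \<omega>"]
      by (force simp: dist_commute)
    then show "fcomp f \<omega> k ` A \<subseteq> U" using e(2) by blast
  qed
qed

lemma fcomp_image_in_interior:
  assumes "\<omega> \<in> words N" "\<pi> \<omega> \<in> interior A"
  obtains k where "k > 0" "fcomp f \<omega> k ` A \<subseteq> interior A"
proof -
  obtain K where "\<And>k. k \<ge> K \<Longrightarrow> fcomp f \<omega> k ` A \<subseteq> interior A"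
    using eventually_fcomp_image_subset[OF assms(1) open_interior assms(2)]
    unfolding eventually_sequentially by blast
  moreover have "K \<le> Suc K" by simp
  ultimately show ?thesis using that[of "Suc K"] by blast
qed

lemma fcomp_image_meets:
  assumes \<omega>: "\<omega> \<in> words N" and \<rho>: "\<rho> \<in> words N" and agree: "\<And>i. i < L \<Longrightarrow> \<rho> i = \<omega> i"
    and B: "fcomp f \<rho> l ` A \<subseteq> B"
  shows "fcomp f \<omega> L ` A \<inter> B \<noteq> {}"
proof -
  have "fcomp f \<rho> (max l L) ` A \<subseteq> fcomp f \<rho> L ` A"
    using fcomp_image_antimono[OF \<rho>] by simp
  also have "fcomp f \<rho> L = fcomp f \<omega> L" by (rule fcomp_cong) (rule agree)
  finally have "fcomp f \<rho> (max l L) ` A \<subseteq> fcomp f \<omega> L ` A \<inter> B"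
    using fcomp_image_antimono[OF \<rho>, of l "max l L"] B by auto
  then show ?thesis using A_nonempty by blast
qed

lemma disjunctive_imp_strongly_reversible:
  assumes "interior A \<noteq> {}" and \<theta>: "\<theta> \<in> words N" "disjunctive N \<theta>"
  shows "strongly_reversible N A \<pi> \<theta>"
proof -
  obtain x where x: "x \<in> interior A" using assms(1) by blast
  then obtain \<omega>0 where \<omega>0: "\<omega>0 \<in> words N" "\<pi> \<omega>0 = x"
    using coord_surj interior_subset by blast
  then obtain k where k: "fcomp f \<omega>0 k ` A \<subseteq> interior A"
    using fcomp_image_in_interior x by blast
  have "set (map \<omega>0 [0..<k]) \<subseteq> {1..N}" using \<omega>0(1) by (auto simp: words_def)
  then obtain \<omega> where \<omega>: "\<omega> \<in> words N" "\<And>i. i < k \<Longrightarrow> \<omega> i = \<omega>0 i"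
    and rev: "\<forall>M. \<exists>m\<ge>M. \<forall>i<m. \<omega> i = \<theta> (m - 1 - i)"
    using reversed_prefixes_of_disjunctive[OF \<theta>, of "map \<omega>0 [0..<k]"] by auto
  have "fcomp f \<omega> k = fcomp f \<omega>0 k" by (rule fcomp_cong) (rule \<omega>(2))
  then have "\<pi> \<omega> \<in> interior A" using coord_in_fcomp_image[OF \<omega>(1), of k] k by auto
  then show ?thesis unfolding strongly_reversible_def using \<omega>(1) rev by blast
qed

lemma reversible_imp_full:
  assumes "reversible N A \<pi> \<theta>"
  shows "full f A \<theta>"
proof -
  obtain \<omega> where \<omega>: "\<omega> \<in> words N" "\<pi> \<omega> \<in> interior A"
    and rev: "\<And>M L. M > 0 \<Longrightarrow> L > 0 \<Longrightarrow> \<exists>m\<ge>M. \<forall>i<L. \<omega> i = \<theta> (m + L - 1 - i)"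
    using assms unfolding reversible_def by blast
  obtain k where k: "k > 0" "fcomp f \<omega> k ` A \<subseteq> interior A"
    using fcomp_image_in_interior[OF \<omega>] by blast
  have "ne_compact (fcomp f \<omega> k ` A)"
    using compact_fcomp_image[OF \<omega>(1)] A_nonempty by (simp add: ne_compact_def)
  moreover have "\<exists>n m. n > m \<and> m \<ge> M \<and> blockcomp f \<theta> m (n - m) ` A \<subseteq> fcomp f \<omega> k ` A"
    if M: "M > 0" for M
  proof -
    obtain m where m: "m \<ge> M" "\<forall>i<k. \<omega> i = \<theta> (m + k - 1 - i)"
      using rev[OF M k(1)] by blast
    have "blockcomp f \<theta> m k = fcomp f \<omega> k"
      unfolding blockcomp_eq_fcomp using m(2) by (intro fcomp_cong) simp
    then show ?thesis using m(1) k(1) by (intro exI[of _ "m + k"] exI[of _ m]) simp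
  qed
  ultimately show ?thesis unfolding full_def using k(2) by (intro exI[of _ "fcomp f \<omega> k ` A"]) blast
qed

text \<open>The end positions \<open>n\<close> of blocks mapping \<open>A\<close> into \<open>A'\<close> are unbounded; a limit \<open>\<omega>\<close> of the
  words read backwards from them is the required address, and \<open>\<pi> \<omega> \<in> A'\<close> because
  \<open>f\<^sub>\<omega>\<^sub>|\<^sub>L(A)\<close> contains the image of \<open>A\<close> under such a block.\<close>
lemma full_imp_reversible:
  assumes \<theta>: "\<theta> \<in> words N" and "full f A \<theta>"
  shows "reversible N A \<pi> \<theta>"
proof -
  obtain A' where A': "compact A'" "A' \<subseteq> interior A"
    and blocks: "\<And>M. M > 0 \<Longrightarrow> \<exists>n m. n > m \<and> m \<ge> M \<and> blockcomp f \<theta> m (n - m) ` A \<subseteq> A'"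
    using assms(2) unfolding full_def ne_compact_def by blast
  define G where "G = {n. \<exists>m<n. blockcomp f \<theta> m (n - m) ` A \<subseteq> A'}"
  have "\<exists>n\<in>G. n \<ge> M" for M
    using blocks[of "Suc M"] unfolding G_def by force
  then have "infinite G" unfolding infinite_nat_iff_unbounded_le by blast
  then obtain \<omega> where \<omega>: "\<omega> \<in> words N"
    and lim: "\<And>L. infinite {n\<in>G. \<forall>i<L. \<theta> (n - 1 - i) = \<omega> i}"
    using reversed_prefix_limit[OF \<theta>] by blast
  have "\<pi> \<omega> \<in> A'"
  proof (rule coord_in_closed[OF \<omega> compact_imp_closed[OF A'(1)]])
    fix L
    obtain n where n: "n \<in> G" "\<forall>i<L. \<theta> (n - 1 - i) = \<omega> i"
      using infinite_imp_nonempty[OF lim[of L]] by blast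
    then obtain m where "m < n" "blockcomp f \<theta> m (n - m) ` A \<subseteq> A'" unfolding G_def by blast
    then have block: "fcomp f (\<lambda>i. \<theta> (n - 1 - i)) (n - m) ` A \<subseteq> A'"
      by (simp add: blockcomp_eq_fcomp)
    have "(\<lambda>i. \<theta> (n - 1 - i)) \<in> words N" using \<theta> by (simp add: words_def)
    from fcomp_image_meets[OF \<omega> this _ block] n(2)
    show "fcomp f \<omega> L ` A \<inter> A' \<noteq> {}" by simp
  qed
  moreover have "\<exists>m\<ge>M. \<forall>i<L. \<omega> i = \<theta> (m + L - 1 - i)" for M L
  proof -
    obtain n where "n \<ge> M + L" "\<forall>i<L. \<theta> (n - 1 - i) = \<omega> i"
      using lim[of L] unfolding infinite_nat_iff_unbounded_le by blast
    then show ?thesis by (intro exI[of _ "n - L"]) auto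
  qed
  ultimately show ?thesis unfolding reversible_def using \<omega> A'(2) by blast
qed

end

theorem mainTheorem1:
  fixes f :: "nat \<Rightarrow> 'a::complete_space \<Rightarrow> 'a"
    and N :: nat
    and A :: "'a set"
    and \<pi> :: "(nat \<Rightarrow> nat) \<Rightarrow> 'a"
  assumes cont: "\<And>i. i \<in> {1..N} \<Longrightarrow> continuous_on UNIV (f i)"
    and attr: "attractor f N A"
    and pf: "point_fibred f N A"
    and coord: "coord_map f N A \<pi>"
  shows "(N \<ge> 2 \<longrightarrow> infinite {\<theta>\<in>words N. disjunctive N \<theta>})
       \<and> (interior A \<noteq> {} \<longrightarrow> (\<forall>\<theta>\<in>words N. disjunctive N \<theta> \<longrightarrow> strongly_reversible N A \<pi> \<theta>))
       \<and> (\<forall>\<theta>\<in>words N. strongly_reversible N A \<pi> \<theta> \<longrightarrow> reversible N A \<pi> \<theta>)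
       \<and> (\<forall>\<theta>\<in>words N. reversible N A \<pi> \<theta> \<longleftrightarrow> full f A \<theta>)"
proof -
  interpret ifs_attractor f N A \<pi> using cont attr coord by unfold_locales
  show ?thesis
    by (intro conjI impI ballI iffI)
      (simp_all add: infinite_disjunctive_words disjunctive_imp_strongly_reversible
        strongly_reversible_imp_reversible reversible_imp_full full_imp_reversible)
qed

end
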